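(* For $n\geq 4$ and $m\in\{3,\dots,n-1\}$, the algebra $\mathtt{A}_n^{\{m\}}$ has infinite representation type.
   Context: $\Bbbk$ is an algebraically closed field; arrows compose right to left. $\mathtt{A}_n$ is the algebra of the quiver with vertices $1,\dots,n$, arrows $a_i:i\to i+1$, $b_i:i+1\to i$ ($1\le i\le n-1$), relations $a_ib_i=b_{i+1}a_{i+1}$ ($1\le i\le n-2$), $a_{n-1}b_{n-1}=0$. For $X\subset\{2,\dots,n\}$, $e_X$ is the sum of primitive idempotents for vertices in $\{1\}\cup X$ and $\mathtt{A}_n^X=e_X\mathtt{A}_ne_X$. *)

theory Defs
  imports "Jordan_Normal_Form.Matrix" "HOL-Computational_Algebra.Polynomial"
begin

text \<open>Arrows of the quiver of A_n: (True, i) is a_i : i -> i+1, (False, i) is b_i : i+1 -> i.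
  A path is a pair (s, xs): start vertex s and the list of arrows, in the order they are
  traversed (the first list element is applied first).\<close>

type_synonym arrow = "bool \<times> nat"
type_synonym qpath = "nat \<times> arrow list"

definition arr_ok :: "nat \<Rightarrow> arrow \<Rightarrow> bool" where
  "arr_ok n x = (1 \<le> snd x \<and> snd x \<le> n - 1)"

definition arr_src :: "arrow \<Rightarrow> nat" where
  "arr_src x = (if fst x then snd x else snd x + 1)"

definition arr_tgt :: "arrow \<Rightarrow> nat" where
  "arr_tgt x = (if fst x then snd x + 1 else snd x)"

fun walk :: "nat \<Rightarrow> nat \<Rightarrow> arrow list \<Rightarrow> bool" where
  "walk n v [] = (1 \<le> v \<and> v \<le> n)"
| "walk n v (x # xs) = (1 \<le> v \<and> v \<le> n \<and> arr_ok n x \<and> arr_src x = v \<and> walk n (arr_tgt x) xs)"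

fun walk_end :: "nat \<Rightarrow> arrow list \<Rightarrow> nat" where
  "walk_end v [] = v"
| "walk_end v (x # xs) = walk_end (arr_tgt x) xs"

definition psrc :: "qpath \<Rightarrow> nat" where "psrc p = fst p"
definition ptgt :: "qpath \<Rightarrow> nat" where "ptgt p = walk_end (fst p) (snd p)"

text \<open>Valid paths of the quiver of A_n whose source and target lie in the vertex set I
  (these span e_I (kQ) e_I).\<close>
definition vpath :: "nat \<Rightarrow> nat set \<Rightarrow> qpath \<Rightarrow> bool" where
  "vpath n I p = (walk n (fst p) (snd p) \<and> psrc p \<in> I \<and> ptgt p \<in> I)"

definition idem_set :: "nat set \<Rightarrow> nat set" where
  "idem_set X = insert 1 X"

text \<open>A finite-dimensional (left) module over A_n^X = e_X A_n e_X, given by the spaces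
  e_i M = K^(d i) for i in {1} \<union> X and the action rho p : K^(d (psrc p)) -> K^(d (ptgt p))
  of each path p with endpoints in {1} \<union> X. The action must be unital, multiplicative,
  and kill the ideal generated by the relations a_i b_i = b_(i+1) a_(i+1) (1 \<le> i \<le> n-2)
  and a_(n-1) b_(n-1) = 0 (equivalently: kill every u r v with u, v paths and r a relation).\<close>
definition is_rep :: "nat \<Rightarrow> nat set \<Rightarrow> (nat \<Rightarrow> nat) \<times> (qpath \<Rightarrow> 'a::field mat) \<Rightarrow> bool" where
  "is_rep n X R = (let I = idem_set X; d = fst R; \<rho> = snd R in
     (\<forall>p. vpath n I p \<longrightarrow> \<rho> p \<in> carrier_mat (d (ptgt p)) (d (psrc p)))
   \<and> (\<forall>i\<in>I. \<rho> (i, []) = 1\<^sub>m (d i))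
   \<and> (\<forall>s xs ys. vpath n I (s, xs) \<longrightarrow> vpath n I (walk_end s xs, ys) \<longrightarrow>
         \<rho> (s, xs @ ys) = \<rho> (walk_end s xs, ys) * \<rho> (s, xs))
   \<and> (\<forall>s us vs i. 1 \<le> i \<and> i \<le> n - 2 \<longrightarrow>
         vpath n I (s, us @ [(False, i), (True, i)] @ vs) \<longrightarrow>
         vpath n I (s, us @ [(True, i + 1), (False, i + 1)] @ vs) \<longrightarrow>
         \<rho> (s, us @ [(False, i), (True, i)] @ vs) = \<rho> (s, us @ [(True, i + 1), (False, i + 1)] @ vs))
   \<and> (\<forall>s us vs. vpath n I (s, us @ [(False, n - 1), (True, n - 1)] @ vs) \<longrightarrow>
         \<rho> (s, us @ [(False, n - 1), (True, n - 1)] @ vs) =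
           0\<^sub>m (d (ptgt (s, us @ [(False, n - 1), (True, n - 1)] @ vs))) (d s)))"

definition rep_iso :: "nat \<Rightarrow> nat set \<Rightarrow> (nat \<Rightarrow> nat) \<times> (qpath \<Rightarrow> 'a::field mat)
    \<Rightarrow> (nat \<Rightarrow> nat) \<times> (qpath \<Rightarrow> 'a mat) \<Rightarrow> bool" where
  "rep_iso n X R S = (\<exists>\<phi>. (\<forall>i\<in>idem_set X. \<phi> i \<in> carrier_mat (fst S i) (fst R i) \<and> invertible_mat (\<phi> i))
     \<and> (\<forall>p. vpath n (idem_set X) p \<longrightarrow> \<phi> (ptgt p) * snd R p = snd S p * \<phi> (psrc p)))"

definition rep_sum :: "(nat \<Rightarrow> nat) \<times> (qpath \<Rightarrow> 'a::field mat)
    \<Rightarrow> (nat \<Rightarrow> nat) \<times> (qpath \<Rightarrow> 'a mat) \<Rightarrow> (nat \<Rightarrow> nat) \<times> (qpath \<Rightarrow> 'a mat)" where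
  "rep_sum R S = ((\<lambda>i. fst R i + fst S i),
     (\<lambda>p. four_block_mat (snd R p) (0\<^sub>m (fst R (ptgt p)) (fst S (psrc p)))
                         (0\<^sub>m (fst S (ptgt p)) (fst R (psrc p))) (snd S p)))"

definition rep_nonzero :: "nat set \<Rightarrow> (nat \<Rightarrow> nat) \<times> (qpath \<Rightarrow> 'a mat) \<Rightarrow> bool" where
  "rep_nonzero X R = (\<exists>i\<in>idem_set X. fst R i > 0)"

definition indecomposable :: "nat \<Rightarrow> nat set \<Rightarrow> (nat \<Rightarrow> nat) \<times> (qpath \<Rightarrow> 'a::field mat) \<Rightarrow> bool" where
  "indecomposable n X R = (is_rep n X R \<and> rep_nonzero X R \<and>
     \<not> (\<exists>R1 R2. is_rep n X R1 \<and> is_rep n X R2 \<and> rep_nonzero X R1 \<and> rep_nonzero X R2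
                \<and> rep_iso n X R (rep_sum R1 R2)))"

definition infinite_rep_type :: "'a::field itself \<Rightarrow> nat \<Rightarrow> nat set \<Rightarrow> bool" where
  "infinite_rep_type TYPE('a) n X = (\<not> (\<exists>F :: ((nat \<Rightarrow> nat) \<times> (qpath \<Rightarrow> 'a mat)) set.
      finite F \<and> (\<forall>R. indecomposable n X R \<longrightarrow> (\<exists>S\<in>F. rep_iso n X R S))))"

definition alg_closed :: "'a::field itself \<Rightarrow> bool" where
  "alg_closed TYPE('a) = (\<forall>p :: 'a poly. degree p > 0 \<longrightarrow> (\<exists>x. poly p x = 0))"

end

theory Submission
  imports Defs
begin

text \<open>For a scalar c let M_c be the module with e_1 M_c = e_m M_c = K^2 on which every path of
  positive length acts by a multiple of the square-zero matrix E_21, the multiple depending only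
  on the endpoints and the length of the path: the 2-cycles at 1 and at m and the shortest path
  1 \<rightarrow> m act by E_21, the shortest path m \<rightarrow> 1 acts by c E_21, and every other path acts by 0.
  This respects composition because a composite of two nontrivial paths is too long to act
  nontrivially, and it respects the relations because the commutativity relations relate paths
  with equal endpoints and length, while a path through vertex n is too long.

  A homomorphism M_c' \<rightarrow> M_c is, at both vertices, lower triangular with a common diagonal
  entry a: the 2-cycles force the triangular shape and the path 1 \<rightarrow> m equates the diagonals,
  while the path m \<rightarrow> 1 gives a c' = c a. Hence the only idempotent endomorphisms of M_c are 0
  and 1, so M_c is indecomposable, and M_c \<cong> M_c' forces c = c'. An algebraically closed field
  is infinite, so these modules cannot be covered by finitely many isomorphism classes.\<close>

section \<open>Walks in the quiver\<close>

lemma walk_vertex_bounds: "walk n v xs \<Longrightarrow> 1 \<le> v \<and> v \<le> n"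
  by (cases xs) auto

lemma walk_append: "walk n v (xs @ ys) = (walk n v xs \<and> walk n (walk_end v xs) ys)"
  by (induction xs arbitrary: v) (auto dest: walk_vertex_bounds)

lemma walk_end_append: "walk_end v (xs @ ys) = walk_end (walk_end v xs) ys"
  by (induction xs arbitrary: v) auto

lemma walk_length_bounds:
  "walk n v xs \<Longrightarrow> v \<le> walk_end v xs + length xs \<and> walk_end v xs \<le> v + length xs
     \<and> even (length xs + v + walk_end v xs)"
proof (induction xs arbitrary: v)
  case Nil
  then show ?case by simp
next
  case (Cons x xs)
  then have "walk n (arr_tgt x) xs" and "arr_src x = v" by auto
  with Cons.IH[of "arr_tgt x"] show ?case
    by (cases x) (auto simp: arr_src_def arr_tgt_def split: if_splits)
qed

lemma walk_length_between:
  assumes "walk n s xs" "xs \<noteq> []" "s \<in> {1, m}" "walk_end s xs \<in> {1, m}" "3 \<le> m"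
  shows "2 \<le> length xs \<and> (s \<noteq> walk_end s xs \<longrightarrow> m - 1 \<le> length xs)"
proof -
  have "m - 1 \<le> length xs" if "s \<noteq> walk_end s xs"
    using walk_length_bounds[OF assms(1)] assms(3,4) that by auto
  moreover have "2 \<le> length xs" if "s = walk_end s xs"
  proof -
    have "even (length xs)" using walk_length_bounds[OF assms(1)] that by auto
    moreover have "length xs \<noteq> 0" using assms(2) by simp
    ultimately show ?thesis by presburger
  qed
  ultimately show ?thesis using assms(5) by fastforce
qed

definition ascent :: "nat \<Rightarrow> nat \<Rightarrow> arrow list" where
  "ascent i k = map (\<lambda>j. (True, j)) [i..<k]"

definition descent :: "nat \<Rightarrow> nat \<Rightarrow> arrow list" where
  "descent i k = map (\<lambda>j. (False, j)) (rev [i..<k])"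

lemma walk_ascent:
  assumes "1 \<le> i" "i \<le> k" "k \<le> n"
  shows "walk n i (ascent i k) \<and> walk_end i (ascent i k) = k"
  using assms(2,3)
proof (induction k rule: dec_induct)
  case base
  then show ?case using assms(1) by (simp add: ascent_def)
next
  case (step j)
  then show ?case using assms(1)
    by (simp add: ascent_def walk_append walk_end_append arr_ok_def arr_src_def arr_tgt_def)
qed

lemma walk_descent:
  assumes "1 \<le> i" "i \<le> k" "k \<le> n"
  shows "walk n k (descent i k) \<and> walk_end k (descent i k) = i"
  using assms(2,3)
proof (induction k rule: dec_induct)
  case base
  then show ?case using assms(1) by (simp add: descent_def)
next
  case (step j)
  then show ?case using assms(1)
    by (simp add: descent_def arr_ok_def arr_src_def arr_tgt_def)
qed

lemma vpath_ends: "vpath n I p \<Longrightarrow> psrc p \<in> I \<and> ptgt p \<in> I"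
  by (simp add: vpath_def)

lemma vpath_loop:
  assumes "i \<in> I" "1 \<le> i" "i < n"
  shows "vpath n I (i, [(True, i), (False, i)])" "ptgt (i, [(True, i), (False, i)]) = i"
  using assms by (auto simp: vpath_def psrc_def ptgt_def arr_ok_def arr_src_def arr_tgt_def)

lemma vpath_ascent:
  assumes "i \<in> I" "k \<in> I" "1 \<le> i" "i \<le> k" "k \<le> n"
  shows "vpath n I (i, ascent i k)" "ptgt (i, ascent i k) = k"
  using walk_ascent[OF assms(3-5)] assms(1,2) by (auto simp: vpath_def psrc_def ptgt_def)

lemma vpath_descent:
  assumes "i \<in> I" "k \<in> I" "1 \<le> i" "i \<le> k" "k \<le> n"
  shows "vpath n I (k, descent i k)" "ptgt (k, descent i k) = i"
  using walk_descent[OF assms(3-5)] assms(1,2) by (auto simp: vpath_def psrc_def ptgt_def)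

section \<open>Matrices\<close>

lemma mult_mat_assoc_left_free:
  assumes "B \<in> carrier_mat k l" "C \<in> carrier_mat l q"
  shows "A * B * C = A * (B * C)"
proof (rule eq_matI)
  fix i j assume ij: "i < dim_row (A * (B * C))" "j < dim_col (A * (B * C))"
  have "(A * B * C) $$ (i, j) = (\<Sum>s<l. (\<Sum>r<k. row A i $ r * B $$ (r, s)) * C $$ (s, j))"
    using assms ij by (simp add: scalar_prod_def atLeast0LessThan)
  also have "\<dots> = (\<Sum>r<k. row A i $ r * (\<Sum>s<l. B $$ (r, s) * C $$ (s, j)))"
    by (simp add: sum_distrib_left sum_distrib_right mult.assoc sum.swap[of _ "{..<l}"])
  also have "\<dots> = (A * (B * C)) $$ (i, j)"
    using assms ij by (simp add: scalar_prod_def atLeast0LessThan)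
  finally show "(A * B * C) $$ (i, j) = (A * (B * C)) $$ (i, j)" .
qed (use assms in auto)

definition inverse_mats :: "nat \<Rightarrow> 'a::semiring_1 mat \<Rightarrow> 'a mat \<Rightarrow> bool" where
  "inverse_mats d A B \<longleftrightarrow>
     A \<in> carrier_mat d d \<and> B \<in> carrier_mat d d \<and> A * B = 1\<^sub>m d \<and> B * A = 1\<^sub>m d"

lemma invertible_mat_inverse_mats:
  assumes "invertible_mat A" "A \<in> carrier_mat k l"
  shows "k = l \<and> (\<exists>B. inverse_mats k A B)"
proof -
  have "k = l" using assms unfolding invertible_mat_def square_mat.simps by auto
  have "dim_row A = k" using assms(2) by simp
  then obtain B where AB: "A * B = 1\<^sub>m k" and BA: "B * A = 1\<^sub>m (dim_row B)"
    using assms(1) unfolding invertible_mat_def inverts_mat_def by auto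
  have "dim_col B = k" using arg_cong[OF AB, of dim_col] by simp
  moreover have "dim_row B = k" using arg_cong[OF BA, of dim_col] assms(2) \<open>k = l\<close> by simp
  ultimately show ?thesis
    using AB BA assms(2) \<open>k = l\<close> unfolding inverse_mats_def by auto
qed

lemma inverse_mats_sym: "inverse_mats d A B \<Longrightarrow> inverse_mats d B A"
  unfolding inverse_mats_def by blast

lemma inverse_mats_cancel_left:
  assumes "inverse_mats d A B" "M \<in> carrier_mat d q"
  shows "A * (B * M) = M"
proof -
  have A: "A \<in> carrier_mat d d" and B: "B \<in> carrier_mat d d" and AB: "A * B = 1\<^sub>m d"
    using assms(1) unfolding inverse_mats_def by auto
  have "A * (B * M) = A * B * M" using assoc_mult_mat[OF A B assms(2)] by simp
  then show ?thesis using AB assms(2) by simp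
qed

lemma inverse_mats_conj_idem:
  assumes inv: "inverse_mats d A B" and P: "P \<in> carrier_mat d d" and idem: "P * P = P"
  shows "B * (P * A) * (B * (P * A)) = B * (P * A)"
proof -
  have A: "A \<in> carrier_mat d d" and B: "B \<in> carrier_mat d d"
    using inv unfolding inverse_mats_def by auto
  have PA: "P * A \<in> carrier_mat d d" using P A by simp
  have "B * (P * A) * (B * (P * A)) = B * (P * A * (B * (P * A)))"
    by (rule assoc_mult_mat[OF B PA mult_carrier_mat[OF B PA]])
  also have "P * A * (B * (P * A)) = P * (A * (B * (P * A)))"
    by (rule assoc_mult_mat[OF P A mult_carrier_mat[OF B PA]])
  also have "A * (B * (P * A)) = P * A"
    using inv PA by (rule inverse_mats_cancel_left)
  also have "P * (P * A) = P * A"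
    using assoc_mult_mat[OF P P A] idem by simp
  finally show ?thesis .
qed

lemma inverse_mats_unconj:
  assumes inv: "inverse_mats d A B" and P: "P \<in> carrier_mat d d"
  shows "P = A * (B * (P * A)) * B"
proof -
  have A: "A \<in> carrier_mat d d" and B: "B \<in> carrier_mat d d" and AB: "A * B = 1\<^sub>m d"
    using inv unfolding inverse_mats_def by auto
  have "A * (B * (P * A)) = P * A"
    using inv mult_carrier_mat[OF P A] by (rule inverse_mats_cancel_left)
  then have "A * (B * (P * A)) * B = P * (A * B)"
    using assoc_mult_mat[OF P A B] by simp
  then show ?thesis using AB P by simp
qed

lemma inverse_mats_conj_eq_0:
  assumes inv: "inverse_mats d A B" and P: "P \<in> carrier_mat d d" and "B * (P * A) = 0\<^sub>m d d"
  shows "P = 0\<^sub>m d d"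
proof -
  have "A \<in> carrier_mat d d" "B \<in> carrier_mat d d"
    using inv unfolding inverse_mats_def by auto
  then show ?thesis using inverse_mats_unconj[OF inv P] assms(3) by simp
qed

lemma inverse_mats_conj_eq_1:
  assumes inv: "inverse_mats d A B" and P: "P \<in> carrier_mat d d" and "B * (P * A) = 1\<^sub>m d"
  shows "P = 1\<^sub>m d"
proof -
  have "A \<in> carrier_mat d d" "A * B = 1\<^sub>m d"
    using inv unfolding inverse_mats_def by auto
  then show ?thesis using inverse_mats_unconj[OF inv P] assms(3) by simp
qed

definition block_proj :: "nat \<Rightarrow> nat \<Rightarrow> 'a::semiring_1 mat" where
  "block_proj k l = four_block_mat (1\<^sub>m k) (0\<^sub>m k l) (0\<^sub>m l k) (0\<^sub>m l l)"

lemma block_proj_carrier [simp]: "block_proj k l \<in> carrier_mat (k + l) (k + l)"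
  by (simp add: block_proj_def)

lemma block_proj_idem: "block_proj k l * block_proj k l = block_proj k l"
  unfolding block_proj_def
  by (simp add: mult_four_block_mat[OF one_carrier_mat zero_carrier_mat zero_carrier_mat
      zero_carrier_mat one_carrier_mat zero_carrier_mat zero_carrier_mat zero_carrier_mat])

lemma block_proj_commute:
  assumes A: "A \<in> carrier_mat k k'" and B: "B \<in> carrier_mat l l'"
  shows "block_proj k l * four_block_mat A (0\<^sub>m k l') (0\<^sub>m l k') B
       = four_block_mat A (0\<^sub>m k l') (0\<^sub>m l k') B * block_proj k' l'"
  unfolding block_proj_def
  using A B
  by (simp add: mult_four_block_mat[OF one_carrier_mat zero_carrier_mat zero_carrier_mat
      zero_carrier_mat A zero_carrier_mat zero_carrier_mat B]
    mult_four_block_mat[OF A zero_carrier_mat zero_carrier_mat B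
      one_carrier_mat zero_carrier_mat zero_carrier_mat zero_carrier_mat])

lemma index_block_proj:
  "i < k + l \<Longrightarrow> j < k + l \<Longrightarrow> block_proj k l $$ (i, j) = (if i = j \<and> i < k then 1 else 0)"
  by (simp add: block_proj_def)

lemma block_proj_neq_zero:
  assumes "0 < k"
  shows "block_proj k l \<noteq> (0\<^sub>m (k + l) (k + l) :: 'a::semiring_1 mat)"
proof
  assume "block_proj k l = (0\<^sub>m (k + l) (k + l) :: 'a mat)"
  then have "(block_proj k l :: 'a mat) $$ (0, 0) = 0" using assms by simp
  then show False using assms by (simp add: index_block_proj)
qed

lemma block_proj_neq_one:
  assumes "0 < l"
  shows "block_proj k l \<noteq> (1\<^sub>m (k + l) :: 'a::semiring_1 mat)"
proof
  assume "block_proj k l = (1\<^sub>m (k + l) :: 'a mat)"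
  then have "(block_proj k l :: 'a mat) $$ (k, k) = 1" using assms by simp
  then show False using assms by (simp add: index_block_proj)
qed

lemma idempotent_lower_triangular_mat2:
  fixes E :: "'a::idom mat"
  assumes E: "E \<in> carrier_mat 2 2" and idem: "E * E = E"
    and shape: "E $$ (0, 1) = 0" "E $$ (1, 1) = E $$ (0, 0)"
  shows "(E $$ (0, 0) = 0 \<and> E = 0\<^sub>m 2 2) \<or> (E $$ (0, 0) = 1 \<and> E = 1\<^sub>m 2)"
proof -
  have prod: "(E * E) $$ (i, j) = E $$ (i, 0) * E $$ (0, j) + E $$ (i, 1) * E $$ (1, j)"
    if "i < 2" "j < 2" for i j
    using E that by (simp add: scalar_prod_def eval_nat_numeral)
  have a: "E $$ (0, 0) * E $$ (0, 0) = E $$ (0, 0)"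
    using prod[of 0 0] idem shape by simp
  have b: "E $$ (1, 0) * E $$ (0, 0) + E $$ (0, 0) * E $$ (1, 0) = E $$ (1, 0)"
    using prod[of 1 0] idem shape by simp
  consider "E $$ (0, 0) = 0" | "E $$ (0, 0) = 1"
    using a by (metis mult_cancel_right1 mult_eq_0_iff)
  then show ?thesis
  proof cases
    case 1
    with b have "E $$ (1, 0) = 0" by simp
    with 1 shape E have "E = 0\<^sub>m 2 2" by (intro eq_matI) (auto simp: less_2_cases_iff)
    with 1 show ?thesis by simp
  next
    case 2
    with b have "E $$ (1, 0) + E $$ (1, 0) = E $$ (1, 0)" by simp
    then have "E $$ (1, 0) = 0" by (metis add.right_neutral add_left_cancel)
    with 2 shape E have "E = 1\<^sub>m 2" by (intro eq_matI) (auto simp: less_2_cases_iff)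
    with 2 show ?thesis by simp
  qed
qed

lemma mat2_first_row_zero_mult:
  assumes "X \<in> carrier_mat 2 2" "Y \<in> carrier_mat 2 2" "X $$ (0, 0) = 0" "X $$ (0, 1) = 0"
  shows "(X * Y) $$ (0, 0) = 0"
  using assms by (simp add: scalar_prod_def eval_nat_numeral)

section \<open>Homomorphisms of representations\<close>

definition intertwiner :: "nat \<Rightarrow> nat set \<Rightarrow> (qpath \<Rightarrow> 'a::semiring_1 mat) \<Rightarrow> (qpath \<Rightarrow> 'a mat)
    \<Rightarrow> (nat \<Rightarrow> 'a mat) \<Rightarrow> bool" where
  "intertwiner n I \<rho> \<sigma> \<phi> \<longleftrightarrow> (\<forall>p. vpath n I p \<longrightarrow> \<phi> (ptgt p) * \<rho> p = \<sigma> p * \<phi> (psrc p))"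

lemma intertwiner_comp:
  assumes \<phi>: "intertwiner n I \<rho> \<sigma> \<phi>" and \<psi>: "intertwiner n I \<sigma> \<tau> \<psi>"
    and maps: "\<And>i. i \<in> I \<Longrightarrow> \<phi> i \<in> carrier_mat d d \<and> \<psi> i \<in> carrier_mat d d"
    and actions: "\<And>p. vpath n I p \<Longrightarrow> \<rho> p \<in> carrier_mat d d \<and> \<sigma> p \<in> carrier_mat d d"
  shows "intertwiner n I \<rho> \<tau> (\<lambda>i. \<psi> i * \<phi> i)"
  unfolding intertwiner_def
proof (intro allI impI)
  fix p assume p: "vpath n I p"
  let ?s = "psrc p" and ?t = "ptgt p"
  have c: "\<phi> ?s \<in> carrier_mat d d" "\<phi> ?t \<in> carrier_mat d d" "\<psi> ?s \<in> carrier_mat d d"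
    "\<psi> ?t \<in> carrier_mat d d" "\<rho> p \<in> carrier_mat d d" "\<sigma> p \<in> carrier_mat d d"
    using maps actions p vpath_ends by blast+
  have \<phi>p: "\<phi> ?t * \<rho> p = \<sigma> p * \<phi> ?s" and \<psi>p: "\<psi> ?t * \<sigma> p = \<tau> p * \<psi> ?s"
    using \<phi> \<psi> p unfolding intertwiner_def by blast+
  have "\<psi> ?t * \<phi> ?t * \<rho> p = \<psi> ?t * (\<sigma> p * \<phi> ?s)"
    using c \<phi>p by simp
  also have "\<dots> = \<psi> ?t * \<sigma> p * \<phi> ?s"
    using c by simp
  also have "\<dots> = \<tau> p * \<psi> ?s * \<phi> ?s"
    by (simp only: \<psi>p)
  also have "\<dots> = \<tau> p * (\<psi> ?s * \<phi> ?s)"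
    using c(3,1) by (rule mult_mat_assoc_left_free)
  finally show "\<psi> ?t * \<phi> ?t * \<rho> p = \<tau> p * (\<psi> ?s * \<phi> ?s)" .
qed

text \<open>Here \<sigma> is not assumed to be square: rep_iso does not require its target to be a
  representation, so \<sigma> p may carry extra columns that \<sigma> p * \<phi> (psrc p) ignores. This is why
  associativity is only available in the form of mult_mat_assoc_left_free.\<close>

lemma intertwiner_inverse_comp:
  assumes \<phi>: "intertwiner n I \<rho> \<sigma> \<phi>" and \<psi>: "intertwiner n I \<rho>' \<sigma> \<psi>"
    and maps: "\<And>i. i \<in> I \<Longrightarrow> inverse_mats d (\<phi> i) (\<beta> i) \<and> \<psi> i \<in> carrier_mat d d"
    and actions: "\<And>p. vpath n I p \<Longrightarrow> \<rho> p \<in> carrier_mat d d \<and> \<rho>' p \<in> carrier_mat d d"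
  shows "intertwiner n I \<rho>' \<rho> (\<lambda>i. \<beta> i * \<psi> i)"
  unfolding intertwiner_def
proof (intro allI impI)
  fix p assume p: "vpath n I p"
  let ?s = "psrc p" and ?t = "ptgt p"
  have inv: "inverse_mats d (\<phi> ?s) (\<beta> ?s)" "inverse_mats d (\<phi> ?t) (\<beta> ?t)"
    and c: "\<psi> ?s \<in> carrier_mat d d" "\<psi> ?t \<in> carrier_mat d d" "\<rho> p \<in> carrier_mat d d"
      "\<rho>' p \<in> carrier_mat d d"
    using maps actions p vpath_ends by blast+
  have c\<phi>: "\<phi> ?s \<in> carrier_mat d d" "\<beta> ?s \<in> carrier_mat d d" "\<phi> ?t \<in> carrier_mat d d"
    "\<beta> ?t \<in> carrier_mat d d"
    using inv unfolding inverse_mats_def by blast+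
  have "\<rho> p = \<beta> ?t * (\<phi> ?t * \<rho> p)"
    using inverse_mats_cancel_left[OF inverse_mats_sym[OF inv(2)] c(3)] by simp
  then have \<rho>: "\<rho> p = \<beta> ?t * (\<sigma> p * \<phi> ?s)"
    using \<phi> p unfolding intertwiner_def by simp
  have \<psi>p: "\<psi> ?t * \<rho>' p = \<sigma> p * \<psi> ?s"
    using \<psi> p unfolding intertwiner_def by blast
  have \<sigma>\<phi>: "\<sigma> p * \<phi> ?s \<in> carrier_mat (dim_row (\<sigma> p)) d"
    using c\<phi>(1) unfolding carrier_mat_def by simp
  have X: "\<beta> ?s * \<psi> ?s \<in> carrier_mat d d"
    using c\<phi>(2) c(1) by simp
  have "\<rho> p * (\<beta> ?s * \<psi> ?s) = \<beta> ?t * (\<sigma> p * \<phi> ?s * (\<beta> ?s * \<psi> ?s))"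
    unfolding \<rho> using \<sigma>\<phi> X by (rule mult_mat_assoc_left_free)
  also have "\<dots> = \<beta> ?t * (\<sigma> p * (\<phi> ?s * (\<beta> ?s * \<psi> ?s)))"
    using mult_mat_assoc_left_free[OF c\<phi>(1) X] by simp
  also have "\<dots> = \<beta> ?t * (\<psi> ?t * \<rho>' p)"
    using inverse_mats_cancel_left[OF inv(1) c(1)] \<psi>p by simp
  also have "\<dots> = \<beta> ?t * \<psi> ?t * \<rho>' p"
    using c c\<phi> by simp
  finally show "\<beta> ?t * \<psi> ?t * \<rho>' p = \<rho> p * (\<beta> ?s * \<psi> ?s)" by simp
qed

lemma rep_isoE:
  assumes "rep_iso n X R S"
  obtains \<phi> \<beta> where
    "\<And>i. i \<in> idem_set X \<Longrightarrow> fst S i = fst R i \<and> inverse_mats (fst R i) (\<phi> i) (\<beta> i)"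
    "intertwiner n (idem_set X) (snd R) (snd S) \<phi>"
proof -
  obtain \<phi> where \<phi>: "\<forall>i\<in>idem_set X. \<phi> i \<in> carrier_mat (fst S i) (fst R i) \<and> invertible_mat (\<phi> i)"
    and int: "intertwiner n (idem_set X) (snd R) (snd S) \<phi>"
    using assms unfolding rep_iso_def intertwiner_def by blast
  have "\<forall>i\<in>idem_set X. \<exists>B. fst S i = fst R i \<and> inverse_mats (fst R i) (\<phi> i) B"
  proof
    fix i assume "i \<in> idem_set X"
    with \<phi> invertible_mat_inverse_mats[of "\<phi> i" "fst S i" "fst R i"]
    show "\<exists>B. fst S i = fst R i \<and> inverse_mats (fst R i) (\<phi> i) B" by auto
  qed
  then obtain \<beta> where "\<forall>i\<in>idem_set X. fst S i = fst R i \<and> inverse_mats (fst R i) (\<phi> i) (\<beta> i)"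
    by (rule bchoice[elim_format]) blast
  with int that show ?thesis by blast
qed

lemma is_rep_carrier:
  "is_rep n X R \<Longrightarrow> vpath n (idem_set X) p \<Longrightarrow> snd R p \<in> carrier_mat (fst R (ptgt p)) (fst R (psrc p))"
  unfolding is_rep_def Let_def by blast

lemma rep_sum_carrier:
  assumes "is_rep n X R1" "is_rep n X R2" "vpath n (idem_set X) p"
  shows "snd (rep_sum R1 R2) p \<in> carrier_mat (fst R1 (ptgt p) + fst R2 (ptgt p)) (fst R1 (psrc p) + fst R2 (psrc p))"
  using is_rep_carrier[OF assms(1,3)] is_rep_carrier[OF assms(2,3)] unfolding rep_sum_def by simp

lemma rep_sum_block_proj_intertwiner:
  assumes "is_rep n X R1" "is_rep n X R2"
  shows "intertwiner n (idem_set X) (snd (rep_sum R1 R2)) (snd (rep_sum R1 R2))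
    (\<lambda>i. block_proj (fst R1 i) (fst R2 i))"
  unfolding intertwiner_def
proof (intro allI impI)
  fix p assume "vpath n (idem_set X) p"
  with is_rep_carrier[OF assms(1)] is_rep_carrier[OF assms(2)]
  show "block_proj (fst R1 (ptgt p)) (fst R2 (ptgt p)) * snd (rep_sum R1 R2) p
      = snd (rep_sum R1 R2) p * block_proj (fst R1 (psrc p)) (fst R2 (psrc p))"
    unfolding rep_sum_def by (simp add: block_proj_commute)
qed

lemma rep_sum_iso_idempotent_endo:
  assumes r: "is_rep n X R1" "is_rep n X R2"
    and iso: "rep_iso n X R (rep_sum R1 R2)"
    and dim: "\<And>i. i \<in> idem_set X \<Longrightarrow> fst R i = d"
    and R: "\<And>p. vpath n (idem_set X) p \<Longrightarrow> snd R p \<in> carrier_mat d d"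
  obtains E where "intertwiner n (idem_set X) (snd R) (snd R) E"
    and "\<And>i. i \<in> idem_set X \<Longrightarrow> E i \<in> carrier_mat d d \<and> E i * E i = E i"
    and "\<And>i. i \<in> idem_set X \<Longrightarrow> E i = 0\<^sub>m d d \<Longrightarrow> fst R1 i = 0"
    and "\<And>i. i \<in> idem_set X \<Longrightarrow> E i = 1\<^sub>m d \<Longrightarrow> fst R2 i = 0"
proof -
  let ?I = "idem_set X" and ?\<sigma> = "snd (rep_sum R1 R2)"
  define P :: "nat \<Rightarrow> 'a mat" where "P i = block_proj (fst R1 i) (fst R2 i)" for i
  obtain \<phi> \<beta> where
    \<phi>: "\<And>i. i \<in> ?I \<Longrightarrow> fst R1 i + fst R2 i = d \<and> inverse_mats d (\<phi> i) (\<beta> i)"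
    and \<phi>_int: "intertwiner n ?I (snd R) ?\<sigma> \<phi>"
    using iso by (elim rep_isoE) (auto simp: dim rep_sum_def)
  have P: "P i \<in> carrier_mat d d" if "i \<in> ?I" for i
    using block_proj_carrier[of "fst R1 i" "fst R2 i"] \<phi>[OF that] unfolding P_def by simp
  have "intertwiner n ?I (snd R) ?\<sigma> (\<lambda>i. P i * \<phi> i)"
  proof (rule intertwiner_comp[OF \<phi>_int])
    show "intertwiner n ?I ?\<sigma> ?\<sigma> P"
      using rep_sum_block_proj_intertwiner[OF r] unfolding P_def .
    show "snd R p \<in> carrier_mat d d \<and> ?\<sigma> p \<in> carrier_mat d d" if "vpath n ?I p" for p
      using R[OF that] rep_sum_carrier[OF r that] \<phi> vpath_ends[OF that] by simp
  qed (use \<phi> P in \<open>auto simp: inverse_mats_def\<close>)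
  then have "intertwiner n ?I (snd R) (snd R) (\<lambda>i. \<beta> i * (P i * \<phi> i))"
    by (rule intertwiner_inverse_comp[OF \<phi>_int])
      (use \<phi> P R in \<open>auto simp: inverse_mats_def intro: mult_carrier_mat\<close>)
  moreover have "\<beta> i * (P i * \<phi> i) \<in> carrier_mat d d \<and>
      \<beta> i * (P i * \<phi> i) * (\<beta> i * (P i * \<phi> i)) = \<beta> i * (P i * \<phi> i)" if "i \<in> ?I" for i
    using \<phi>[OF that] P[OF that] inverse_mats_conj_idem[of d "\<phi> i" "\<beta> i" "P i"] block_proj_idem
    unfolding P_def inverse_mats_def by auto
  moreover have "fst R1 i = 0" if "i \<in> ?I" "\<beta> i * (P i * \<phi> i) = 0\<^sub>m d d" for i
    using inverse_mats_conj_eq_0[OF _ P[OF that(1)] that(2)] \<phi>[OF that(1)] block_proj_neq_zero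
    unfolding P_def by fastforce
  moreover have "fst R2 i = 0" if "i \<in> ?I" "\<beta> i * (P i * \<phi> i) = 1\<^sub>m d" for i
    using inverse_mats_conj_eq_1[OF _ P[OF that(1)] that(2)] \<phi>[OF that(1)] block_proj_neq_one
    unfolding P_def by fastforce
  ultimately show ?thesis by (rule that)
qed

lemma alg_closed_infinite:
  assumes "alg_closed TYPE('a::field)"
  shows "infinite (UNIV :: 'a set)"
proof
  assume fin: "finite (UNIV :: 'a set)"
  define q :: "'a poly" where "q = (\<Prod>a\<in>UNIV. [:- a, 1:])"
  have "degree q = card (UNIV :: 'a set)"
    unfolding q_def by (subst degree_prod_eq_sum_degree) auto
  moreover have "card (UNIV :: 'a set) > 0" using fin by (simp add: card_gt_0_iff)
  ultimately have "degree (1 + q) > 0" by (subst degree_add_eq_right) auto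
  then obtain x where "poly (1 + q) x = 0" using assms unfolding alg_closed_def by blast
  moreover have "poly q x = 0" unfolding q_def poly_prod using fin by (simp add: prod_zero_iff)
  ultimately show False by simp
qed

lemma infinite_rep_typeI:
  fixes M :: "'b \<Rightarrow> (nat \<Rightarrow> nat) \<times> (qpath \<Rightarrow> 'a::field mat)"
  assumes "infinite (UNIV :: 'b set)"
    and indec: "\<And>c. indecomposable n X (M c)"
    and unique: "\<And>c c' S. rep_iso n X (M c) S \<Longrightarrow> rep_iso n X (M c') S \<Longrightarrow> c = c'"
  shows "infinite_rep_type TYPE('a) n X"
  unfolding infinite_rep_type_def
proof (intro notI, elim exE conjE)
  fix F :: "((nat \<Rightarrow> nat) \<times> (qpath \<Rightarrow> 'a mat)) set"
  assume "finite F" and cover: "\<forall>R. indecomposable n X R \<longrightarrow> (\<exists>S\<in>F. rep_iso n X R S)"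
  have "\<forall>c. \<exists>S. S \<in> F \<and> rep_iso n X (M c) S"
    using cover indec by blast
  then obtain f where f: "\<And>c. f c \<in> F \<and> rep_iso n X (M c) (f c)"
    by metis
  have "range f \<subseteq> F"
    using f by blast
  then have "finite (range f)"
    using \<open>finite F\<close> by (rule finite_subset)
  moreover have "inj f"
  proof (rule injI)
    fix c c' assume "f c = f c'"
    then show "c = c'" using unique[of c "f c" c'] f[of c] f[of c'] by simp
  qed
  ultimately have "finite (UNIV :: 'b set)"
    by (rule finite_imageD)
  with assms(1) show False by contradiction
qed

section \<open>The family of modules\<close>

definition nil_mat :: "'a::field \<Rightarrow> 'a mat" where
  "nil_mat c = mat 2 2 (\<lambda>(i, j). if i = 1 \<and> j = 0 then c else 0)"

lemma nil_mat_carrier [simp]: "nil_mat c \<in> carrier_mat 2 2"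
  by (simp add: nil_mat_def)

lemma nil_mat_mult_nil_mat: "nil_mat c * nil_mat d = 0\<^sub>m 2 2"
  by (rule eq_matI) (auto simp: nil_mat_def scalar_prod_def eval_nat_numeral)

lemma nil_mat_0: "nil_mat 0 = 0\<^sub>m 2 2"
  by (rule eq_matI) (auto simp: nil_mat_def)

lemma nil_mat_intertwine:
  assumes X: "X \<in> carrier_mat 2 2" and Y: "Y \<in> carrier_mat 2 2"
    and eq: "Y * nil_mat a' = nil_mat a * X"
  shows "Y $$ (0, 1) * a' = 0" "Y $$ (1, 1) * a' = a * X $$ (0, 0)" "a * X $$ (0, 1) = 0"
proof -
  have "(Y * nil_mat a') $$ (i, j) = (nil_mat a * X) $$ (i, j)" for i j
    using eq by simp
  from this[of 0 0] this[of 1 0] this[of 1 1] X Y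
  show "Y $$ (0, 1) * a' = 0" "Y $$ (1, 1) * a' = a * X $$ (0, 0)" "a * X $$ (0, 1) = 0"
    by (simp_all add: nil_mat_def scalar_prod_def eval_nat_numeral)
qed

definition path_coeff :: "nat \<Rightarrow> 'a::field \<Rightarrow> nat \<Rightarrow> nat \<Rightarrow> nat \<Rightarrow> 'a" where
  "path_coeff m c s t l =
     (if s = t \<and> l = 2 then 1
      else if s = 1 \<and> t = m \<and> l = m - 1 then 1
      else if s = m \<and> t = 1 \<and> l = m - 1 then c
      else 0)"

definition family_action :: "nat \<Rightarrow> 'a::field \<Rightarrow> qpath \<Rightarrow> 'a mat" where
  "family_action m c p =
     (if snd p = [] then 1\<^sub>m 2 else nil_mat (path_coeff m c (psrc p) (ptgt p) (length (snd p))))"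

definition family_rep :: "nat \<Rightarrow> 'a::field \<Rightarrow> (nat \<Rightarrow> nat) \<times> (qpath \<Rightarrow> 'a mat)" where
  "family_rep m c = ((\<lambda>_. 2), family_action m c)"

lemma family_action_carrier [simp]: "family_action m c p \<in> carrier_mat 2 2"
  by (simp add: family_action_def)

lemma family_action_append:
  assumes m: "3 \<le> m"
    and xs: "vpath n {1, m} (s, xs)" and ys: "vpath n {1, m} (walk_end s xs, ys)"
  shows "family_action m c (s, xs @ ys) = family_action m c (walk_end s xs, ys) * family_action m c (s, xs)"
proof (cases "xs = [] \<or> ys = []")
  case True
  then show ?thesis by (auto simp: family_action_def left_mult_one_mat[OF nil_mat_carrier]
    right_mult_one_mat[OF nil_mat_carrier])
next
  case False
  let ?t = "walk_end s xs" and ?u = "walk_end (walk_end s xs) ys"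
  have "2 \<le> length xs \<and> (s \<noteq> ?t \<longrightarrow> m - 1 \<le> length xs)"
    using walk_length_between[of n s xs] xs False m by (auto simp: vpath_def psrc_def ptgt_def)
  moreover have "2 \<le> length ys \<and> (?t \<noteq> ?u \<longrightarrow> m - 1 \<le> length ys)"
    using walk_length_between[of n ?t ys] ys False m by (auto simp: vpath_def psrc_def ptgt_def)
  ultimately have "path_coeff m c s ?u (length xs + length ys) = 0"
    using m by (auto simp: path_coeff_def)
  then show ?thesis
    using False by (simp add: family_action_def psrc_def ptgt_def walk_end_append nil_mat_mult_nil_mat nil_mat_0)
qed

lemma family_action_zero_relation:
  assumes m: "3 \<le> m" "m \<le> n - 1"
    and p: "vpath n {1, m} (s, us @ [(False, n - 1), (True, n - 1)] @ vs)"
  shows "family_action m c (s, us @ [(False, n - 1), (True, n - 1)] @ vs) = 0\<^sub>m 2 2"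
proof -
  let ?v = "walk_end s us"
  have us: "walk n s us" and "walk n ?v ([(False, n - 1), (True, n - 1)] @ vs)"
    and st: "s \<in> {1, m}" "walk_end n vs \<in> {1, m}"
    using p m by (auto simp: vpath_def psrc_def ptgt_def walk_append walk_end_append arr_src_def arr_tgt_def)
  then have "?v = n" and "walk n n vs" using m by (auto simp: arr_src_def arr_tgt_def)
  \<comment> \<open>A path through vertex n between vertices of {1, m} is longer than m - 1, since m < n.\<close>
  with walk_length_bounds[OF us] walk_length_bounds[OF \<open>walk n n vs\<close>] st m
  have "path_coeff m c s (walk_end n vs) (length us + 2 + length vs) = 0"
    by (auto simp: path_coeff_def)
  then show ?thesis
    using m \<open>?v = n\<close>
    by (simp add: family_action_def psrc_def ptgt_def walk_end_append arr_tgt_def nil_mat_0)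
qed

lemma family_rep_is_rep:
  assumes "3 \<le> m" "m \<le> n - 1"
  shows "is_rep n {m} (family_rep m c)"
proof -
  have idem: "idem_set {m} = {1, m}" by (simp add: idem_set_def)
  have "\<forall>i\<in>{1, m}. family_action m c (i, []) = 1\<^sub>m 2"
    by (simp add: family_action_def)
  moreover have "\<forall>s us vs i. family_action m c (s, us @ [(False, i), (True, i)] @ vs)
      = family_action m c (s, us @ [(True, i + 1), (False, i + 1)] @ vs)"
    by (simp add: family_action_def psrc_def ptgt_def walk_end_append arr_tgt_def)
  ultimately show ?thesis
    using family_action_carrier family_action_append[OF assms(1)] family_action_zero_relation[OF assms]
    unfolding is_rep_def Let_def family_rep_def fst_conv snd_conv idem by blast
qed

lemma family_intertwiner_shape:
  assumes m: "3 \<le> m" "m \<le> n - 1"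
    and X: "intertwiner n {1, m} (family_action m c') (family_action m c) X"
    and X1: "X 1 \<in> carrier_mat 2 2" and Xm: "X m \<in> carrier_mat 2 2"
  shows "X 1 $$ (0, 1) = 0 \<and> X 1 $$ (1, 1) = X 1 $$ (0, 0)
    \<and> X m $$ (0, 1) = 0 \<and> X m $$ (0, 0) = X 1 $$ (0, 0) \<and> X m $$ (1, 1) = X 1 $$ (0, 0)
    \<and> X 1 $$ (0, 0) * c' = c * X 1 $$ (0, 0)"
proof -
  have path: "X t * nil_mat (path_coeff m c' s t (length xs)) = nil_mat (path_coeff m c s t (length xs)) * X s"
    if "vpath n {1, m} (s, xs)" "ptgt (s, xs) = t" "xs \<noteq> []" for s t xs
    using X that unfolding intertwiner_def by (force simp: family_action_def psrc_def)
  have "X 1 * nil_mat 1 = nil_mat 1 * X 1"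
    using path[OF vpath_loop[of 1 "{1, m}" n]] m by (simp add: path_coeff_def)
  from nil_mat_intertwine[OF X1 X1 this]
  have 1: "X 1 $$ (0, 1) = 0" "X 1 $$ (1, 1) = X 1 $$ (0, 0)" by simp_all
  have "X m * nil_mat 1 = nil_mat 1 * X m"
    using path[OF vpath_loop[of m "{1, m}" n]] m by (simp add: path_coeff_def)
  from nil_mat_intertwine[OF Xm Xm this]
  have 2: "X m $$ (0, 1) = 0" "X m $$ (1, 1) = X m $$ (0, 0)" by simp_all
  have "X m * nil_mat 1 = nil_mat 1 * X 1"
    using path[OF vpath_ascent[of 1 "{1, m}" m n]] m by (simp add: path_coeff_def ascent_def)
  from nil_mat_intertwine(2)[OF X1 Xm this]
  have 3: "X m $$ (1, 1) = X 1 $$ (0, 0)" by simp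
  have "X 1 * nil_mat c' = nil_mat c * X m"
    using path[OF vpath_descent[of 1 "{1, m}" m n]] m by (simp add: path_coeff_def descent_def)
  from nil_mat_intertwine(2)[OF Xm X1 this]
  have 4: "X 1 $$ (1, 1) * c' = c * X m $$ (0, 0)" .
  from 1 2 3 4 show ?thesis by (simp add: mult.commute)
qed

lemma family_idempotent_endo:
  assumes m: "3 \<le> m" "m \<le> n - 1"
    and E: "intertwiner n {1, m} (family_action m c) (family_action m c) E"
    and carrier: "\<And>i. i \<in> {1, m} \<Longrightarrow> E i \<in> carrier_mat 2 2"
    and idem: "\<And>i. i \<in> {1, m} \<Longrightarrow> E i * E i = E i"
  shows "(E 1 = 0\<^sub>m 2 2 \<and> E m = 0\<^sub>m 2 2) \<or> (E 1 = 1\<^sub>m 2 \<and> E m = 1\<^sub>m 2)"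
proof -
  have shape: "E 1 $$ (0, 1) = 0 \<and> E 1 $$ (1, 1) = E 1 $$ (0, 0) \<and> E m $$ (0, 1) = 0
      \<and> E m $$ (0, 0) = E 1 $$ (0, 0) \<and> E m $$ (1, 1) = E 1 $$ (0, 0)"
    using family_intertwiner_shape[OF m E] carrier by blast
  have "(E 1 $$ (0, 0) = 0 \<and> E 1 = 0\<^sub>m 2 2) \<or> (E 1 $$ (0, 0) = 1 \<and> E 1 = 1\<^sub>m 2)"
    using idempotent_lower_triangular_mat2[of "E 1"] carrier idem shape by blast
  moreover have "(E m $$ (0, 0) = 0 \<and> E m = 0\<^sub>m 2 2) \<or> (E m $$ (0, 0) = 1 \<and> E m = 1\<^sub>m 2)"
    using idempotent_lower_triangular_mat2[of "E m"] carrier idem shape by simp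
  ultimately show ?thesis using shape by auto
qed

lemma family_rep_indecomposable:
  assumes m: "3 \<le> m" "m \<le> n - 1"
  shows "indecomposable n {m} (family_rep m c)"
proof -
  have idem: "idem_set {m} = {1, m}" by (simp add: idem_set_def)
  have False
    if r: "is_rep n {m} R1" "is_rep n {m} R2" and nz: "rep_nonzero {m} R1" "rep_nonzero {m} R2"
      and iso: "rep_iso n {m} (family_rep m c) (rep_sum R1 R2)"
    for R1 R2 :: "(nat \<Rightarrow> nat) \<times> (qpath \<Rightarrow> 'a mat)"
  proof -
    obtain E where E: "intertwiner n {1, m} (family_action m c) (family_action m c) E"
      and idem_E: "\<And>i. i \<in> {1, m} \<Longrightarrow> E i \<in> carrier_mat 2 2 \<and> E i * E i = E i"
      and E0: "\<And>i. i \<in> {1, m} \<Longrightarrow> E i = 0\<^sub>m 2 2 \<Longrightarrow> fst R1 i = 0"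
      and E1: "\<And>i. i \<in> {1, m} \<Longrightarrow> E i = 1\<^sub>m 2 \<Longrightarrow> fst R2 i = 0"
      by (rule rep_sum_iso_idempotent_endo[OF r iso, of 2]) (auto simp: idem family_rep_def)
    have "(E 1 = 0\<^sub>m 2 2 \<and> E m = 0\<^sub>m 2 2) \<or> (E 1 = 1\<^sub>m 2 \<and> E m = 1\<^sub>m 2)"
      using family_idempotent_endo[OF m E] idem_E by blast
    then show False
      using nz E0 E1 unfolding rep_nonzero_def idem by fastforce
  qed
  moreover have "rep_nonzero {m} (family_rep m c)"
    by (auto simp: rep_nonzero_def family_rep_def idem_set_def)
  ultimately show ?thesis
    using family_rep_is_rep[OF m] unfolding indecomposable_def by blast
qed

lemma family_rep_iso_imp_eq:
  assumes m: "3 \<le> m" "m \<le> n - 1"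
    and iso: "rep_iso n {m} (family_rep m c) S" "rep_iso n {m} (family_rep m c') S"
  shows "c = c'"
proof -
  have idem: "idem_set {m} = {1, m}" by (simp add: idem_set_def)
  obtain \<phi> \<beta> where \<phi>: "\<And>i. i \<in> {1, m} \<Longrightarrow> inverse_mats 2 (\<phi> i) (\<beta> i)"
    and \<phi>_int: "intertwiner n {1, m} (family_action m c) (snd S) \<phi>"
    using iso(1) by (elim rep_isoE) (auto simp: idem family_rep_def)
  obtain \<psi> \<delta> where \<psi>: "\<And>i. i \<in> {1, m} \<Longrightarrow> inverse_mats 2 (\<psi> i) (\<delta> i)"
    and \<psi>_int: "intertwiner n {1, m} (family_action m c') (snd S) \<psi>"
    using iso(2) by (elim rep_isoE) (auto simp: idem family_rep_def)
  define X where "X i = \<beta> i * \<psi> i" for i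
  have "intertwiner n {1, m} (family_action m c') (family_action m c) X"
    unfolding X_def
    by (rule intertwiner_inverse_comp[OF \<phi>_int \<psi>_int]) (use \<phi> \<psi> in \<open>auto simp: inverse_mats_def\<close>)
  moreover have X: "X i \<in> carrier_mat 2 2" if "i \<in> {1, m}" for i
    using \<phi>[OF that] \<psi>[OF that] unfolding X_def inverse_mats_def by auto
  ultimately have shape: "X 1 $$ (0, 1) = 0" "X 1 $$ (0, 0) * c' = c * X 1 $$ (0, 0)"
    using family_intertwiner_shape[OF m] by blast+
  have \<phi>1: "inverse_mats 2 (\<phi> 1) (\<beta> 1)" and \<psi>1: "inverse_mats 2 (\<psi> 1) (\<delta> 1)"
    using \<phi> \<psi> by auto
  then have c: "\<beta> 1 \<in> carrier_mat 2 2" "\<psi> 1 \<in> carrier_mat 2 2" "\<delta> 1 * \<phi> 1 \<in> carrier_mat 2 2"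
    and \<phi>1_carrier: "\<phi> 1 \<in> carrier_mat 2 2"
    unfolding inverse_mats_def by auto
  have "X 1 * (\<delta> 1 * \<phi> 1) = \<beta> 1 * (\<psi> 1 * (\<delta> 1 * \<phi> 1))"
    unfolding X_def by (rule assoc_mult_mat[OF c])
  also have "\<psi> 1 * (\<delta> 1 * \<phi> 1) = \<phi> 1"
    using \<psi>1 \<phi>1_carrier by (rule inverse_mats_cancel_left)
  also have "\<beta> 1 * \<phi> 1 = 1\<^sub>m 2"
    using \<phi>1 unfolding inverse_mats_def by simp
  finally have "X 1 * (\<delta> 1 * \<phi> 1) = 1\<^sub>m 2" .
  moreover have "(X 1 * (\<delta> 1 * \<phi> 1)) $$ (0, 0) = 0" if "X 1 $$ (0, 0) = 0"
    using mat2_first_row_zero_mult[OF X[of 1] c(3) that shape(1)] by simp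
  ultimately have "X 1 $$ (0, 0) \<noteq> 0" by auto
  with shape(2) show ?thesis by (simp add: mult.commute)
qed

theorem lemma1:
  assumes "alg_closed TYPE('a::field)"
    and "n \<ge> 4" and "3 \<le> m" and "m \<le> n - 1"
  shows "infinite_rep_type TYPE('a) n {m}"
  using alg_closed_infinite[OF assms(1)] family_rep_indecomposable[OF assms(3,4)]
    family_rep_iso_imp_eq[OF assms(3,4)]
  by (rule infinite_rep_typeI)

end
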